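(* Let $\kappa,\lambda\in\mathbb{R}$, let ${\rm Y}$ be a locally ${\sf CAT}(\kappa)$ space and let ${\sf E}\colon{\rm Y}\to\mathbb{R}\cup\{+\infty\}$ be $\lambda$-convex and lower semicontinuous. Then for every $y\in D(-\partial^-{\sf E})$ \[ |\partial^-{\sf E}|(y)\le\inf_{v\in-\partial^-{\sf E}(y)}|v|_y . \] In particular $D(-\partial^-{\sf E})\subset D(|\partial^-{\sf E}|)$.
   Context: Locally ${\sf CAT}(\kappa)$ space: complete geodesic metric space $({\rm Y},{\sf d}_{\rm Y})$ in which each point has a neighbourhood that is ${\sf CAT}(\kappa)$ (geodesic triangles of perimeter $<2D_\kappa$ are thinner than comparison triangles in the model plane $\mathbb{M}_\kappa$ of constant curvature $\kappa$; $D_\kappa=\pi/\sqrt\kappa$ if $\kappa>0$, $\infty$ otherwise). Tangent cone ${\rm T}_y{\rm Y}$: completion of the space of constant speed geodesics $\gamma$ emanating from $y$ (defined on some $[0,\varepsilon)$), modulo ${\sf d}_y(\gamma,\eta):=\lim_{t\downarrow0}{\sf d}_{\rm Y}(\gamma_t,\eta_t)/t=0$, with distance ${\sf d}_y$; $\gamma'_0$ is the class of $\gamma$, $0_y$ that of the constant curve, $|v|_y:={\sf d}_y(v,0_y)$, $\langle v,w\rangle_y:=\frac12(|v|_y^2+|w|_y^2-{\sf d}_y^2(v,w))$. $\lambda$-convexity: ${\sf E}(\gamma_t)\le(1-t){\sf E}(\gamma_0)+t{\sf E}(\gamma_1)-\frac\lambda2t(1-t){\sf d}^2_{\rm Y}(\gamma_0,\gamma_1)$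 along every constant speed geodesic $\gamma\colon[0,1]\to{\rm Y}$; $D({\sf E})=\{{\sf E}<\infty\}$. Slope: $|\partial^-{\sf E}|(y):=\limsup_{z\to y}\frac{({\sf E}(y)-{\sf E}(z))^+}{{\sf d}_{\rm Y}(y,z)}$ for $y\in D({\sf E})$, and $D(|\partial^-{\sf E}|)$ is the set where it is finite. Minus-subdifferential: for $y\in D({\sf E})$, $-\partial^-{\sf E}(y)$ is the set of $v\in{\rm T}_y{\rm Y}$ such that for every $z\in{\rm Y}$ there is a geodesic $\gamma\colon[0,1]\to{\rm Y}$ from $y$ to $z$ with ${\sf E}(y)-\langle v,\gamma'_0\rangle_y+\frac\lambda2{\sf d}^2_{\rm Y}(y,z)\le{\sf E}(z)$; $D(-\partial^-{\sf E})$ is the set of $y$ where this set is nonempty. *)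

theory Defs
  imports "HOL-Analysis.Analysis"
begin

definition mink :: "real \<times> real \<times> real \<Rightarrow> real \<times> real \<times> real \<Rightarrow> real" where
  "mink u v = fst u * fst v + fst (snd u) * fst (snd v) - snd (snd u) * snd (snd v)"

text \<open>kappa > 0: sphere of radius 1/sqrt kappa; kappa = 0: the plane z = 0;
  kappa < 0: upper sheet of the hyperboloid of curvature kappa (Minkowski model).\<close>
definition model_carrier :: "real \<Rightarrow> (real \<times> real \<times> real) set" where
  "model_carrier k =
     (if k > 0 then {v. inner v v = 1 / k}
      else if k = 0 then {v. snd (snd v) = 0}
      else {v. mink v v = 1 / k \<and> snd (snd v) > 0})"

definition model_dist :: "real \<Rightarrow> real \<times> real \<times> real \<Rightarrow> real \<times> real \<times> real \<Rightarrow> real" where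
  "model_dist k u v =
     (if k > 0 then arccos (k * inner u v) / sqrt k
      else if k = 0 then dist u v
      else arcosh (k * mink u v) / sqrt (- k))"

definition geodesic_seg :: "(real \<Rightarrow> 'a::metric_space) \<Rightarrow> 'a \<Rightarrow> 'a \<Rightarrow> bool" where
  "geodesic_seg \<gamma> x z \<longleftrightarrow> \<gamma> 0 = x \<and> \<gamma> 1 = z \<and>
     (\<forall>s\<in>{0..1}. \<forall>t\<in>{0..1}. dist (\<gamma> s) (\<gamma> t) = \<bar>s - t\<bar> * dist x z)"

definition geodesic_space :: "'a::metric_space itself \<Rightarrow> bool" where
  "geodesic_space _ \<longleftrightarrow> (\<forall>x z::'a. \<exists>\<gamma>. geodesic_seg \<gamma> x z)"

text \<open>A triangle is given by three sides
  g 0, g 1, g 2, side i going from vertex i to vertex (i+1) mod 3; A i are comparison vertices,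
  and P, Q comparison points of g i s and g j t.\<close>
definition CAT_set :: "real \<Rightarrow> 'a::metric_space set \<Rightarrow> bool" where
  "CAT_set k U \<longleftrightarrow>
    (\<forall>x\<in>U. \<forall>z\<in>U. (k \<le> 0 \<or> dist x z < pi / sqrt k) \<longrightarrow>
        (\<exists>\<gamma>. geodesic_seg \<gamma> x z \<and> \<gamma> ` {0..1} \<subseteq> U)) \<and>
    (\<forall>g :: nat \<Rightarrow> real \<Rightarrow> 'a.
       (\<forall>i<3. geodesic_seg (g i) (g i 0) (g (Suc i mod 3) 0) \<and> g i ` {0..1} \<subseteq> U) \<and>
       (k \<le> 0 \<or> (\<Sum>i<3. dist (g i 0) (g i 1)) < 2 * pi / sqrt k) \<longrightarrow>
       (\<forall>A :: nat \<Rightarrow> real \<times> real \<times> real.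
          (\<forall>i<3. A i \<in> model_carrier k \<and>
                  model_dist k (A i) (A (Suc i mod 3)) = dist (g i 0) (g i 1)) \<longrightarrow>
          (\<forall>i<3. \<forall>j<3. \<forall>s\<in>{0..1}. \<forall>t\<in>{0..1}. \<forall>P Q.
              P \<in> model_carrier k \<and> Q \<in> model_carrier k \<and>
              model_dist k (A i) P = s * dist (g i 0) (g i 1) \<and>
              model_dist k P (A (Suc i mod 3)) = (1 - s) * dist (g i 0) (g i 1) \<and>
              model_dist k (A j) Q = t * dist (g j 0) (g j 1) \<and>
              model_dist k Q (A (Suc j mod 3)) = (1 - t) * dist (g j 0) (g j 1) \<longrightarrow>
              dist (g i s) (g j t) \<le> model_dist k P Q)))"

definition locally_CAT :: "real \<Rightarrow> 'a::metric_space itself \<Rightarrow> bool" where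
  "locally_CAT k T \<longleftrightarrow> (\<forall>y::'a. \<exists>U. y \<in> interior U \<and> CAT_set k U)"

definition germ :: "'a::metric_space \<Rightarrow> (real \<Rightarrow> 'a) \<Rightarrow> bool" where
  "germ y \<gamma> \<longleftrightarrow> \<gamma> 0 = y \<and> (\<exists>\<epsilon>>0. \<exists>c\<ge>0. \<forall>s\<in>{0..<\<epsilon>}. \<forall>t\<in>{0..<\<epsilon>}.
      dist (\<gamma> s) (\<gamma> t) = c * \<bar>s - t\<bar>)"

definition dgerm :: "(real \<Rightarrow> 'a::metric_space) \<Rightarrow> (real \<Rightarrow> 'a) \<Rightarrow> real" where
  "dgerm \<gamma> \<eta> = Lim (at_right 0) (\<lambda>t. dist (\<gamma> t) (\<eta> t) / t)"

text \<open>Elements of the tangent cone T_y Y (the completion of the germs) are represented by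
  d_y-Cauchy sequences of germs at y.\<close>
definition tangent_seq :: "'a::metric_space \<Rightarrow> (nat \<Rightarrow> real \<Rightarrow> 'a) \<Rightarrow> bool" where
  "tangent_seq y v \<longleftrightarrow> (\<forall>n. germ y (v n)) \<and>
     (\<forall>e>0. \<exists>N. \<forall>m\<ge>N. \<forall>n\<ge>N. dgerm (v m) (v n) < e)"

definition tnorm :: "'a::metric_space \<Rightarrow> (nat \<Rightarrow> real \<Rightarrow> 'a) \<Rightarrow> real" where
  "tnorm y v = lim (\<lambda>n. dgerm (v n) (\<lambda>_. y))"

text \<open>\<langle>v, gamma'_0\<rangle>_y for v in T_y Y and a germ gamma.\<close>
definition tinner :: "'a::metric_space \<Rightarrow> (nat \<Rightarrow> real \<Rightarrow> 'a) \<Rightarrow> (real \<Rightarrow> 'a) \<Rightarrow> real" where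
  "tinner y v \<gamma> = lim (\<lambda>n. ((dgerm (v n) (\<lambda>_. y))\<^sup>2 + (dgerm \<gamma> (\<lambda>_. y))\<^sup>2
                               - (dgerm (v n) \<gamma>)\<^sup>2) / 2)"

definition lambda_convex :: "real \<Rightarrow> ('a::metric_space \<Rightarrow> ereal) \<Rightarrow> bool" where
  "lambda_convex l E \<longleftrightarrow> (\<forall>\<gamma> x z. geodesic_seg \<gamma> x z \<longrightarrow> (\<forall>t\<in>{0..1}.
      E (\<gamma> t) \<le> ereal (1 - t) * E x + ereal t * E z - ereal (l / 2 * t * (1 - t) * (dist x z)\<^sup>2)))"

definition lsc :: "('a::topological_space \<Rightarrow> ereal) \<Rightarrow> bool" where
  "lsc E \<longleftrightarrow> (\<forall>c. closed {x. E x \<le> c})"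

definition slope :: "('a::metric_space \<Rightarrow> ereal) \<Rightarrow> 'a \<Rightarrow> ereal" where
  "slope E y = Limsup (at y) (\<lambda>z. max 0 (E y - E z) / ereal (dist y z))"

definition minus_subdiff :: "real \<Rightarrow> ('a::metric_space \<Rightarrow> ereal) \<Rightarrow> 'a \<Rightarrow> (nat \<Rightarrow> real \<Rightarrow> 'a) set" where
  "minus_subdiff l E y = {v. E y \<noteq> \<infinity> \<and> tangent_seq y v \<and>
     (\<forall>z. \<exists>\<gamma>. geodesic_seg \<gamma> y z \<and>
        E y - ereal (tinner y v \<gamma>) + ereal (l / 2 * (dist y z)\<^sup>2) \<le> E z)}"

definition dom_subdiff :: "real \<Rightarrow> ('a::metric_space \<Rightarrow> ereal) \<Rightarrow> 'a set" where
  "dom_subdiff l E = {y. E y \<noteq> \<infinity> \<and> minus_subdiff l E y \<noteq> {}}"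

definition dom_slope :: "('a::metric_space \<Rightarrow> ereal) \<Rightarrow> 'a set" where
  "dom_slope E = {y. E y \<noteq> \<infinity> \<and> slope E y < \<infinity>}"

end

(*
  If v lies in the minus-subdifferential of E at y, then for every z the defining inequality along a
  geodesic gamma from y to z gives E y - E z <= <v, gamma'_0> - lambda/2 d(y,z)^2, and
  <v, gamma'_0> <= |v| d(y,z) is a Cauchy-Schwarz inequality that follows from the triangle
  inequality for d_y alone.  Dividing by d(y,z) and letting z -> y bounds the slope by |v|.

  The triangle inequality for d_y needs the limits lim d(gamma_t, eta_t) / t that define it to
  exist, and this is where the curvature bound enters: in a CAT(kappa) neighbourhood of y the
  comparison angle at y of the triangle spanned by gamma_t and eta_t is monotone in t, hence
  converges as t -> 0, and the law of cosines of the model plane turns this into convergence of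
  d(gamma_t, eta_t) / t.
*)

theory Submission
  imports Defs "HOL-Real_Asymp.Real_Asymp"
begin

section \<open>Limits at 0 from the right\<close>

lemma mono_bounded_tendsto_at_right_0:
  fixes f :: "real \<Rightarrow> real"
  assumes "0 < s1"
    and mono: "\<And>s t. 0 < s \<Longrightarrow> s \<le> t \<Longrightarrow> t < s1 \<Longrightarrow> f s \<le> f t"
    and bound: "\<And>s. 0 < s \<Longrightarrow> s < s1 \<Longrightarrow> B \<le> f s"
  shows "\<exists>L. (f \<longlongrightarrow> L) (at_right 0)"
proof -
  have "(f \<longlongrightarrow> Inf (f ` ({0<..} \<inter> {..<s1}))) (at 0 within {0<..} \<inter> {..<s1})"
    by (rule Lim_right_bound) (use mono bound in auto)
  moreover have "at 0 within {0<..} \<inter> {..<s1} = at_right (0::real)"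
    by (rule at_within_nhd[of _ "{..<s1}"]) (use assms(1) in auto)
  ultimately show ?thesis by auto
qed

text \<open>With \<open>\<phi> u * u\<^sup>2 = 1 - cos u\<close> and \<open>u * \<sigma> u = sin u\<close>, the identity below is the spherical law of
  cosines \<open>1 - cos D = (1 - cos (x - y)) + sin x * sin y * (1 - C)\<close> for a triangle with sides
  \<open>x, y, D\<close> and angle \<open>arccos C\<close> between the first two; the hyperbolic law of cosines has the same
  shape with \<open>cosh u - 1\<close> and \<open>sinh u\<close>.\<close>
lemma ratio_tendsto_if_cosine_law:
  fixes d C \<phi> \<sigma> :: "real \<Rightarrow> real"
  assumes K: "K > 0" and s1: "s1 > 0"
    and d: "\<And>s. 0 < s \<Longrightarrow> s < s1 \<Longrightarrow> 0 \<le> d s \<and> d s \<le> M * s"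
    and C: "(C \<longlongrightarrow> C0) (at_right 0)"
    and \<phi>: "isCont \<phi> 0" "\<phi> 0 = 1/2" and \<sigma>: "isCont \<sigma> 0" "\<sigma> 0 = 1"
    and law: "\<And>s. 0 < s \<Longrightarrow> s < s1 \<Longrightarrow> \<phi> (K * d s) * (K * d s)\<^sup>2
       = \<phi> (c * s) * (c * s)\<^sup>2 + (p * s * \<sigma> (p * s)) * (q * s * \<sigma> (q * s)) * (1 - C s)"
  shows "\<exists>L. ((\<lambda>s. d s / s) \<longlongrightarrow> L) (at_right 0)"
proof -
  define G where "G s = \<phi> (c * s) * c\<^sup>2 + p * q * \<sigma> (p * s) * \<sigma> (q * s) * (1 - C s)" for s
  define G0 where "G0 = 1/2 * c\<^sup>2 + p * q * (1 - C0)"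
  have lin: "((\<lambda>s. e * s) \<longlongrightarrow> 0) (at_right 0)" for e :: real
    by (intro tendsto_mult_right_zero tendsto_ident_at)
  have "(G \<longlongrightarrow> 1/2 * c\<^sup>2 + p * q * 1 * 1 * (1 - C0)) (at_right 0)"
    unfolding G_def
    by (intro tendsto_intros C isCont_tendsto_compose[OF \<phi>(1) lin, unfolded \<phi>(2)]
        isCont_tendsto_compose[OF \<sigma>(1) lin, unfolded \<sigma>(2)])
  then have G: "(G \<longlongrightarrow> G0) (at_right 0)" by (simp add: G0_def)
  have near: "\<forall>\<^sub>F s in at_right 0. s \<in> {0<..<s1}"
    using s1 by (intro eventually_at_right_real) auto
  have "((\<lambda>s. K * d s) \<longlongrightarrow> 0) (at_right 0)"
  proof (rule tendsto_sandwich[OF _ _ tendsto_const lin])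
    show "\<forall>\<^sub>F s in at_right 0. 0 \<le> K * d s" and "\<forall>\<^sub>F s in at_right 0. K * d s \<le> (K * M) * s"
      using near by (eventually_elim, use d K in auto)+
  qed
  then have \<phi>d: "((\<lambda>s. \<phi> (K * d s)) \<longlongrightarrow> 1/2) (at_right 0)"
    using isCont_tendsto_compose[OF \<phi>(1)] \<phi>(2) by metis
  have \<phi>d_pos: "\<forall>\<^sub>F s in at_right 0. 0 < \<phi> (K * d s)"
    using order_tendstoD(1)[OF \<phi>d] by simp
  have "((\<lambda>s. G s / (\<phi> (K * d s) * K\<^sup>2)) \<longlongrightarrow> G0 / (1/2 * K\<^sup>2)) (at_right 0)"
    using K by (intro tendsto_intros G \<phi>d) auto
  moreover have "\<forall>\<^sub>F s in at_right 0. G s / (\<phi> (K * d s) * K\<^sup>2) = (d s / s)\<^sup>2"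
    using near \<phi>d_pos
  proof eventually_elim
    case (elim s)
    have "s\<^sup>2 * G s = \<phi> (K * d s) * (K * d s)\<^sup>2"
      using law[of s] elim unfolding G_def by (simp add: power2_eq_square algebra_simps)
    then show ?case using elim K by (simp add: field_simps power2_eq_square)
  qed
  ultimately have "((\<lambda>s. (d s / s)\<^sup>2) \<longlongrightarrow> G0 / (1/2 * K\<^sup>2)) (at_right 0)"
    by (rule Lim_transform_eventually)
  then have "((\<lambda>s. sqrt ((d s / s)\<^sup>2)) \<longlongrightarrow> sqrt (G0 / (1/2 * K\<^sup>2))) (at_right 0)"
    by (rule tendsto_real_sqrt)
  moreover have "\<forall>\<^sub>F s in at_right 0. sqrt ((d s / s)\<^sup>2) = d s / s"
    using near by eventually_elim (use d in auto)
  ultimately show ?thesis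
    by (blast intro: Lim_transform_eventually)
qed

section \<open>Comparison triangles in the model planes\<close>

text \<open>Geodesic polar coordinates on \<open>M\<^sub>k\<close>: the point at distance \<open>t\<close> from a fixed base point
  in the direction \<open>(C, S)\<close> of the unit circle.\<close>
definition model_point :: "real \<Rightarrow> real \<Rightarrow> real \<Rightarrow> real \<Rightarrow> real \<times> real \<times> real" where
  "model_point k t C S =
     (if k > 0 then (cos (sqrt k * t) / sqrt k, sin (sqrt k * t) * C / sqrt k,
                     sin (sqrt k * t) * S / sqrt k)
      else if k = 0 then (t * C, t * S, 0)
      else (sinh (sqrt (- k) * t) * C / sqrt (- k), sinh (sqrt (- k) * t) * S / sqrt (- k),
            cosh (sqrt (- k) * t) / sqrt (- k)))"

lemma model_point_zero: "model_point k 0 C S = model_point k 0 1 0"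
  by (simp add: model_point_def)

lemma model_dist_model_point_sphere:
  assumes "k > 0"
  shows "model_dist k (model_point k t C1 S1) (model_point k u C2 S2) =
    arccos (cos (sqrt k * t) * cos (sqrt k * u)
      + sin (sqrt k * t) * sin (sqrt k * u) * (C1 * C2 + S1 * S2)) / sqrt k"
proof -
  have "k * inner (model_point k t C1 S1) (model_point k u C2 S2) =
      cos (sqrt k * t) * cos (sqrt k * u) + sin (sqrt k * t) * sin (sqrt k * u) * (C1 * C2 + S1 * S2)"
    using assms by (simp add: model_point_def field_simps power2_eq_square[symmetric])
  then show ?thesis using assms by (simp add: model_dist_def)
qed

lemma model_dist_model_point_plane:
  assumes "C1\<^sup>2 + S1\<^sup>2 = 1" "C2\<^sup>2 + S2\<^sup>2 = 1"
  shows "model_dist 0 (model_point 0 t C1 S1) (model_point 0 u C2 S2) =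
    sqrt (t\<^sup>2 + u\<^sup>2 - 2 * t * u * (C1 * C2 + S1 * S2))"
proof -
  have "(t * C1 - u * C2)\<^sup>2 + (t * S1 - u * S2)\<^sup>2
      = t\<^sup>2 * (C1\<^sup>2 + S1\<^sup>2) + u\<^sup>2 * (C2\<^sup>2 + S2\<^sup>2) - 2 * t * u * (C1 * C2 + S1 * S2)"
    by (simp add: power2_eq_square algebra_simps)
  then show ?thesis
    using assms by (simp add: model_dist_def model_point_def dist_Pair_Pair dist_real_def)
qed

lemma model_dist_model_point_hyperbolic:
  assumes "k < 0"
  shows "model_dist k (model_point k t C1 S1) (model_point k u C2 S2) =
    arcosh (cosh (sqrt (- k) * t) * cosh (sqrt (- k) * u)
      - sinh (sqrt (- k) * t) * sinh (sqrt (- k) * u) * (C1 * C2 + S1 * S2)) / sqrt (- k)"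
proof -
  have "sqrt (- k) * sqrt (- k) = - k" using assms by simp
  then have "k * mink (model_point k t C1 S1) (model_point k u C2 S2) =
      cosh (sqrt (- k) * t) * cosh (sqrt (- k) * u)
      - sinh (sqrt (- k) * t) * sinh (sqrt (- k) * u) * (C1 * C2 + S1 * S2)"
    using assms by (simp add: model_point_def mink_def field_simps)
  then show ?thesis using assms by (simp add: model_dist_def)
qed

lemma model_point_in_model_carrier:
  assumes "C\<^sup>2 + S\<^sup>2 = 1"
  shows "model_point k t C S \<in> model_carrier k"
proof -
  consider "k > 0" | "k = 0" | "k < 0" by linarith
  then show ?thesis
  proof cases
    case 1
    have "k * inner (model_point k t C S) (model_point k t C S)
        = (cos (sqrt k * t))\<^sup>2 + (sin (sqrt k * t))\<^sup>2 * (C\<^sup>2 + S\<^sup>2)"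
      using 1 by (simp add: model_point_def field_simps power2_eq_square)
    then show ?thesis using 1 assms by (simp add: model_carrier_def field_simps)
  next
    case 2
    then show ?thesis by (simp add: model_carrier_def model_point_def)
  next
    case 3
    have "sqrt (- k) * sqrt (- k) = - k" using 3 by simp
    then have "k * mink (model_point k t C S) (model_point k t C S)
        = (cosh (sqrt (- k) * t))\<^sup>2 - (sinh (sqrt (- k) * t))\<^sup>2 * (C\<^sup>2 + S\<^sup>2)"
      using 3 by (simp add: model_point_def mink_def field_simps power2_eq_square)
    then have "k * mink (model_point k t C S) (model_point k t C S) = 1"
      using assms by (simp add: cosh_square_eq)
    moreover have "snd (snd (model_point k t C S)) > 0" using 3 by (simp add: model_point_def)
    ultimately show ?thesis using 3 by (simp add: model_carrier_def field_simps)
  qed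
qed

lemma model_dist_model_point_same_direction:
  assumes CS: "C\<^sup>2 + S\<^sup>2 = 1" and small: "k > 0 \<Longrightarrow> sqrt k * \<bar>t - u\<bar> \<le> pi"
  shows "model_dist k (model_point k t C S) (model_point k u C S) = \<bar>t - u\<bar>"
proof -
  have CS': "C * C + S * S = 1" using CS by (simp add: power2_eq_square)
  have scale: "\<bar>K * t - K * u\<bar> = K * \<bar>t - u\<bar>" if "0 \<le> K" for K :: real
    using that by (simp add: abs_mult flip: right_diff_distrib)
  consider "k > 0" | "k = 0" | "k < 0" by linarith
  then show ?thesis
  proof cases
    case 1
    have "model_dist k (model_point k t C S) (model_point k u C S)
        = arccos (cos (sqrt k * t - sqrt k * u)) / sqrt k"
      using 1 by (simp add: model_dist_model_point_sphere CS' cos_diff)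
    also have "cos (sqrt k * t - sqrt k * u) = cos (sqrt k * \<bar>t - u\<bar>)"
      using scale[of "sqrt k"] 1 by (metis cos_abs_real real_sqrt_ge_zero less_imp_le)
    also have "arccos (cos (sqrt k * \<bar>t - u\<bar>)) = sqrt k * \<bar>t - u\<bar>"
      using 1 small by (intro arccos_cos) auto
    finally show ?thesis using 1 by simp
  next
    case 2
    have "t\<^sup>2 + u\<^sup>2 - 2 * t * u * 1 = (t - u)\<^sup>2" by (simp add: power2_diff)
    then show ?thesis using 2 CS by (simp add: model_dist_model_point_plane CS')
  next
    case 3
    have cosh_abs: "cosh \<bar>x\<bar> = cosh x" for x :: real by (cases "0 \<le> x") simp_all
    have "model_dist k (model_point k t C S) (model_point k u C S)
        = arcosh (cosh (sqrt (- k) * t - sqrt (- k) * u)) / sqrt (- k)"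
      using 3 by (simp add: model_dist_model_point_hyperbolic CS' cosh_diff)
    also have "cosh (sqrt (- k) * t - sqrt (- k) * u) = cosh (sqrt (- k) * \<bar>t - u\<bar>)"
      using scale[of "sqrt (- k)"] 3 cosh_abs by (metis real_sqrt_ge_zero neg_0_le_iff_le less_imp_le)
    also have "arcosh (cosh (sqrt (- k) * \<bar>t - u\<bar>)) = sqrt (- k) * \<bar>t - u\<bar>"
      using 3 by (intro arcosh_cosh_real) auto
    finally show ?thesis using 3 by simp
  qed
qed

text \<open>Here \<open>d s\<close> stands for the distance at time \<open>s\<close> between two geodesics issuing from one
  point with speeds \<open>a\<close> and \<open>b\<close>.  The condition is the \<open>CAT(k)\<close> comparison for the triangle
  they span at time \<open>s\<close>, restricted to pairs of points reached at a common time \<open>r * s\<close>.\<close>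
definition comparison_thin :: "real \<Rightarrow> real \<Rightarrow> real \<Rightarrow> (real \<Rightarrow> real) \<Rightarrow> real \<Rightarrow> bool" where
  "comparison_thin k a b d s \<longleftrightarrow> (\<forall>V A B P Q r.
     {V, A, B, P, Q} \<subseteq> model_carrier k \<and> 0 \<le> r \<and> r \<le> 1 \<and>
     model_dist k V A = a * s \<and> model_dist k A B = d s \<and> model_dist k B V = b * s \<and>
     model_dist k V P = r * (a * s) \<and> model_dist k P A = (1 - r) * (a * s) \<and>
     model_dist k B Q = (1 - r) * (b * s) \<and> model_dist k Q V = r * (b * s) \<longrightarrow>
     d (r * s) \<le> model_dist k P Q)"

lemma comparison_thin_hinge:
  assumes thin: "comparison_thin k a b d s"
    and "0 \<le> a" "0 \<le> b" "0 \<le> s" and r: "0 \<le> r" "r \<le> 1"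
    and small: "k > 0 \<Longrightarrow> sqrt k * (a * s) \<le> pi \<and> sqrt k * (b * s) \<le> pi"
    and CS: "C\<^sup>2 + S\<^sup>2 = 1"
    and side: "model_dist k (model_point k (a * s) 1 0) (model_point k (b * s) C S) = d s"
  shows "d (r * s) \<le> model_dist k (model_point k (r * (a * s)) 1 0) (model_point k (r * (b * s)) C S)"
proof -
  have unit: "(1::real)\<^sup>2 + 0\<^sup>2 = 1" by simp
  have dist_on_ray: "model_dist k (model_point k t C' S') (model_point k u C' S') = \<bar>t - u\<bar>"
    if "C'\<^sup>2 + S'\<^sup>2 = 1" "t \<in> {0..x}" "u \<in> {0..x}" "k > 0 \<Longrightarrow> sqrt k * x \<le> pi"
    for t u x C' S'
  proof (rule model_dist_model_point_same_direction[OF that(1)])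
    assume "k > 0"
    have "sqrt k * \<bar>t - u\<bar> \<le> sqrt k * x" using that \<open>k > 0\<close> by (intro mult_left_mono) auto
    also have "\<dots> \<le> pi" using \<open>k > 0\<close> that(4) by auto
    finally show "sqrt k * \<bar>t - u\<bar> \<le> pi" .
  qed
  have ra: "r * (a * s) \<in> {0..a * s}" and rb: "r * (b * s) \<in> {0..b * s}"
    and a0: "0 \<in> {0..a * s}" "a * s \<in> {0..a * s}" and b0: "0 \<in> {0..b * s}" "b * s \<in> {0..b * s}"
    using assms(2-6) by (auto intro: mult_left_le_one_le)
  have V: "model_point k 0 C S = model_point k 0 1 0" by (rule model_point_zero)
  have small_a: "k > 0 \<Longrightarrow> sqrt k * (a * s) \<le> pi" and small_b: "k > 0 \<Longrightarrow> sqrt k * (b * s) \<le> pi"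
    using small by auto
  have "model_dist k (model_point k 0 1 0) (model_point k (a * s) 1 0) = a * s"
    and "model_dist k (model_point k 0 1 0) (model_point k (r * (a * s)) 1 0) = r * (a * s)"
    and "model_dist k (model_point k (r * (a * s)) 1 0) (model_point k (a * s) 1 0) = (1 - r) * (a * s)"
    using dist_on_ray[OF unit a0(1) a0(2) small_a] dist_on_ray[OF unit a0(1) ra small_a]
      dist_on_ray[OF unit ra a0(2) small_a] ra
    by (auto simp: algebra_simps)
  moreover have "model_dist k (model_point k (b * s) C S) (model_point k 0 1 0) = b * s"
    and "model_dist k (model_point k (b * s) C S) (model_point k (r * (b * s)) C S) = (1 - r) * (b * s)"
    and "model_dist k (model_point k (r * (b * s)) C S) (model_point k 0 1 0) = r * (b * s)"
    using dist_on_ray[OF CS b0(2) b0(1) small_b] dist_on_ray[OF CS b0(2) rb small_b]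
      dist_on_ray[OF CS rb b0(1) small_b] rb V
    by (auto simp: algebra_simps)
  ultimately show ?thesis
    using thin[unfolded comparison_thin_def, rule_format,
        of "model_point k 0 1 0" "model_point k (a * s) 1 0" "model_point k (b * s) C S"
           "model_point k (r * (a * s)) 1 0" "model_point k (r * (b * s)) C S" r]
    using r side by (simp add: model_point_in_model_carrier[OF unit] model_point_in_model_carrier[OF CS])
qed

lemma comparison_thin_plane_le:
  assumes thin: "comparison_thin 0 a b d s" and "0 < a" "0 < b" "0 < s"
    and tri: "\<bar>a - b\<bar> * s \<le> d s" "d s \<le> (a + b) * s" and r: "0 \<le> r" "r \<le> 1"
  shows "d (r * s) \<le> r * d s"
proof -
  define x y D where "x = a * s" and "y = b * s" and "D = d s"
  have xy: "0 < x" "0 < y" using assms(2-4) by (simp_all add: x_def y_def)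
  have "\<bar>x - y\<bar> = \<bar>a - b\<bar> * s" "x + y = (a + b) * s"
    using assms(4) by (simp_all add: x_def y_def abs_mult left_diff_distrib[symmetric] distrib_right)
  then have D: "\<bar>x - y\<bar> \<le> D" "D \<le> x + y" using tri by (simp_all add: D_def)
  define C where "C = (x\<^sup>2 + y\<^sup>2 - D\<^sup>2) / (2 * x * y)"
  have D0: "0 \<le> D" using D(1) by linarith
  have "(x - y)\<^sup>2 \<le> D\<^sup>2" "D\<^sup>2 \<le> (x + y)\<^sup>2"
    using D D0 by (simp_all add: abs_le_square_iff[symmetric] power_mono)
  then have "-1 \<le> C" "C \<le> 1"
    using xy unfolding C_def by (simp_all add: le_divide_eq divide_le_eq power2_eq_square algebra_simps)
  then have CS: "C\<^sup>2 + (sqrt (1 - C\<^sup>2))\<^sup>2 = 1" by (simp add: abs_square_le_1)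
  have law: "x\<^sup>2 + y\<^sup>2 - 2 * x * y * C = D\<^sup>2" using xy by (simp add: C_def)
  have "model_dist 0 (model_point 0 x 1 0) (model_point 0 y C (sqrt (1 - C\<^sup>2))) = d s"
    using D xy by (simp add: model_dist_model_point_plane[OF _ CS] law D_def)
  then have "d (r * s)
      \<le> model_dist 0 (model_point 0 (r * x) 1 0) (model_point 0 (r * y) C (sqrt (1 - C\<^sup>2)))"
    unfolding x_def y_def using assms(2-4) r CS by (intro comparison_thin_hinge[OF thin]) auto
  also have "\<dots> = sqrt (r\<^sup>2 * (x\<^sup>2 + y\<^sup>2 - 2 * x * y * C))"
    using CS
    by (simp add: model_dist_model_point_plane power_mult_distrib power2_eq_square algebra_simps)
  also have "\<dots> = sqrt ((r * D)\<^sup>2)" by (simp add: law power_mult_distrib)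
  also have "\<dots> = r * d s" using r D xy by (simp add: D_def)
  finally show ?thesis .
qed

lemma comparison_ratio_tendsto_plane:
  assumes "0 < a" "0 < b" "0 < s1"
    and tri: "\<And>s. 0 < s \<Longrightarrow> s < s1 \<Longrightarrow> \<bar>a - b\<bar> * s \<le> d s \<and> d s \<le> (a + b) * s"
    and thin: "\<And>s. 0 < s \<Longrightarrow> s < s1 \<Longrightarrow> comparison_thin 0 a b d s"
  shows "\<exists>L. ((\<lambda>s. d s / s) \<longlongrightarrow> L) (at_right 0)"
proof (rule mono_bounded_tendsto_at_right_0[OF \<open>0 < s1\<close>])
  fix s t :: real assume st: "0 < s" "s \<le> t" "t < s1"
  have "d ((s / t) * t) \<le> (s / t) * d t"
    by (rule comparison_thin_plane_le[OF thin]) (use st tri[of t] assms(1,2) in auto)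
  then show "d s / s \<le> d t / t" using st by (simp add: field_simps)
next
  fix s assume s: "0 < s" "s < s1"
  have "0 \<le> \<bar>a - b\<bar> * s" using s by simp
  then have "0 \<le> d s" using tri[OF s] by linarith
  then show "0 \<le> d s / s" using s by simp
qed

text \<open>By the spherical law of cosines, the cosine of the angle between the sides \<open>x\<close> and \<open>y\<close> of a
  triangle with third side \<open>D\<close> on the unit sphere.\<close>
definition spherical_angle_cos :: "real \<Rightarrow> real \<Rightarrow> real \<Rightarrow> real" where
  "spherical_angle_cos x y D = (cos D - cos x * cos y) / (sin x * sin y)"

lemma spherical_angle_cos_bounds:
  fixes x y D :: real
  assumes "0 < x" "0 < y" "x + y \<le> pi" "\<bar>x - y\<bar> \<le> D" "D \<le> x + y"
  shows "-1 \<le> spherical_angle_cos x y D" "spherical_angle_cos x y D \<le> 1"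
proof -
  have sin_pos: "0 < sin x * sin y" using assms by (auto intro!: sin_gt_zero mult_pos_pos)
  have "cos (x + y) \<le> cos D" and "cos D \<le> cos \<bar>x - y\<bar>"
    using assms by (subst cos_mono_le_eq; auto)+
  then have "cos x * cos y - sin x * sin y \<le> cos D" and "cos D \<le> cos x * cos y + sin x * sin y"
    by (simp_all add: cos_add cos_diff)
  then show "-1 \<le> spherical_angle_cos x y D" "spherical_angle_cos x y D \<le> 1"
    using sin_pos by (simp_all add: spherical_angle_cos_def le_divide_eq divide_le_eq)
qed

lemma spherical_cosine_law_bounds:
  fixes x y C :: real
  assumes "0 \<le> x" "x \<le> pi" "0 \<le> y" "y \<le> pi" and C: "-1 \<le> C" "C \<le> 1"
  shows "-1 \<le> cos x * cos y + sin x * sin y * C" "cos x * cos y + sin x * sin y * C \<le> 1"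
proof -
  have "0 \<le> sin x * sin y" using assms by (simp add: sin_ge_zero)
  then have "cos (x + y) \<le> cos x * cos y + sin x * sin y * C"
    "cos x * cos y + sin x * sin y * C \<le> cos (x - y)"
    using mult_left_mono[OF C(1)] mult_left_mono[OF C(2)] by (simp_all add: cos_add cos_diff)
  then show "-1 \<le> cos x * cos y + sin x * sin y * C" "cos x * cos y + sin x * sin y * C \<le> 1"
    using cos_ge_minus_one[of "x + y"] cos_le_one[of "x - y"] by linarith+
qed

lemma le_cos_if_le_arccos:
  fixes t w :: real
  assumes "0 \<le> t" "t \<le> arccos w" "-1 \<le> w" "w \<le> 1"
  shows "w \<le> cos t"
proof -
  have "cos (arccos w) \<le> cos t"
    using assms arccos_ubound[of w] by (subst cos_mono_le_eq) auto
  then show ?thesis using assms(3,4) by simp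
qed

lemma comparison_thin_sphere_le:
  fixes k a b s r :: real and d :: "real \<Rightarrow> real"
  defines "x \<equiv> sqrt k * (a * s)" and "y \<equiv> sqrt k * (b * s)"
    and "C \<equiv> spherical_angle_cos (sqrt k * (a * s)) (sqrt k * (b * s)) (sqrt k * d s)"
  assumes k: "k > 0" and thin: "comparison_thin k a b d s" and "0 < a" "0 < b" "0 < s"
    and small: "sqrt k * (a + b) * s \<le> pi"
    and tri: "\<bar>a - b\<bar> * s \<le> d s" "d s \<le> (a + b) * s" and r: "0 \<le> r" "r \<le> 1"
  shows "-1 \<le> C" "C \<le> 1"
    and "sqrt k * d (r * s) \<le> arccos (cos (r * x) * cos (r * y) + sin (r * x) * sin (r * y) * C)"
proof -
  define K D where "K = sqrt k" and "D = K * d s"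
  have K: "0 < K" using k by (simp add: K_def)
  have xy: "0 < x" "0 < y" "x + y \<le> pi"
    using assms(6-8) small K by (simp_all add: x_def y_def K_def algebra_simps)
  have "x - y = K * ((a - b) * s)" "x + y = K * ((a + b) * s)"
    by (simp_all add: x_def y_def K_def algebra_simps)
  then have "\<bar>x - y\<bar> = K * (\<bar>a - b\<bar> * s)" "x + y = K * ((a + b) * s)"
    using K assms(8) by (simp_all add: abs_mult)
  then have D: "\<bar>x - y\<bar> \<le> D" "D \<le> x + y" using tri K by (simp_all add: D_def)
  show C: "-1 \<le> C" "C \<le> 1"
    unfolding C_def x_def[symmetric] y_def[symmetric] D_def[unfolded K_def, symmetric]
    using xy D by (intro spherical_angle_cos_bounds; simp)+
  then have CS: "C\<^sup>2 + (sqrt (1 - C\<^sup>2))\<^sup>2 = 1" by (simp add: abs_square_le_1)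
  have "0 < sin x" "0 < sin y" using xy by (intro sin_gt_zero; linarith)+
  then have "cos x * cos y + sin x * sin y * C = cos D"
    by (simp add: C_def spherical_angle_cos_def D_def K_def flip: x_def y_def)
  moreover have "arccos (cos D) = D" using D xy by (intro arccos_cos) auto
  ultimately have
    "model_dist k (model_point k (a * s) 1 0) (model_point k (b * s) C (sqrt (1 - C\<^sup>2))) = d s"
    using k K by (simp add: model_dist_model_point_sphere x_def y_def D_def flip: K_def)
  then have "d (r * s) \<le> model_dist k (model_point k (r * (a * s)) 1 0)
      (model_point k (r * (b * s)) C (sqrt (1 - C\<^sup>2)))"
  proof (intro comparison_thin_hinge[OF thin])
    show "sqrt k * (a * s) \<le> pi \<and> sqrt k * (b * s) \<le> pi"
      using xy by (simp add: x_def y_def)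
  qed (use assms(6-8) r CS in auto)
  also have "\<dots> = arccos (cos (r * x) * cos (r * y) + sin (r * x) * sin (r * y) * C) / K"
    using k by (simp add: model_dist_model_point_sphere x_def y_def mult.left_commute flip: K_def)
  finally show "sqrt k * d (r * s) \<le> arccos (cos (r * x) * cos (r * y) + sin (r * x) * sin (r * y) * C)"
    using K by (simp add: field_simps K_def)
qed

lemma comparison_thin_sphere_mono:
  assumes k: "k > 0" and thin: "comparison_thin k a b d s" and "0 < a" "0 < b" "0 < s"
    and small: "sqrt k * (a + b) * s \<le> pi"
    and tri: "\<bar>a - b\<bar> * s \<le> d s" "d s \<le> (a + b) * s"
    and tri_r: "0 \<le> d (r * s)" "d (r * s) \<le> (a + b) * (r * s)" and r: "0 < r" "r \<le> 1"
  shows "spherical_angle_cos (sqrt k * (a * s)) (sqrt k * (b * s)) (sqrt k * d s)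
    \<le> spherical_angle_cos (sqrt k * (a * (r * s))) (sqrt k * (b * (r * s))) (sqrt k * d (r * s))"
proof -
  define K x y where "K = sqrt k" and "x = K * (a * (r * s))" and "y = K * (b * (r * s))"
  define C where "C = spherical_angle_cos (K * (a * s)) (K * (b * s)) (K * d s)"
  have K: "0 < K" using k by (simp add: K_def)
  have "r * (K * ((a + b) * s)) \<le> K * ((a + b) * s)"
    using r K assms(3-5) by (intro mult_left_le_one_le) auto
  then have xy: "0 < x" "0 < y" "x + y \<le> pi"
    using r K assms(3-5) small by (auto simp: x_def y_def K_def algebra_simps)
  have "-1 \<le> C" "C \<le> 1"
    and le: "K * d (r * s) \<le> arccos (cos x * cos y + sin x * sin y * C)"
    using comparison_thin_sphere_le[OF k thin assms(3-5) small tri, of r] r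
    by (simp_all add: C_def x_def y_def K_def mult.left_commute)
  moreover have "K * d (r * s) \<le> K * ((a + b) * (r * s))"
    using tri_r K by (intro mult_left_mono) auto
  ultimately have "cos x * cos y + sin x * sin y * C \<le> cos (K * d (r * s))"
    using xy K tri_r
    by (intro le_cos_if_le_arccos spherical_cosine_law_bounds) (auto simp: x_def y_def algebra_simps)
  moreover have "0 < sin x" "0 < sin y" using xy by (intro sin_gt_zero; linarith)+
  ultimately have "C \<le> spherical_angle_cos x y (K * d (r * s))"
    unfolding spherical_angle_cos_def by (simp add: le_divide_eq algebra_simps)
  then show ?thesis by (simp only: C_def x_def y_def K_def)
qed

definition cos_quot :: "real \<Rightarrow> real" where
  "cos_quot u = (if u = 0 then 1/2 else (1 - cos u) / u\<^sup>2)"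

definition sin_quot :: "real \<Rightarrow> real" where
  "sin_quot u = (if u = 0 then 1 else sin u / u)"

lemma cos_quot_mult_square: "cos_quot u * u\<^sup>2 = 1 - cos u"
  by (simp add: cos_quot_def)

lemma mult_sin_quot: "u * sin_quot u = sin u"
  by (simp add: sin_quot_def)

lemma isCont_cos_quot: "isCont cos_quot 0"
proof -
  have "((\<lambda>u::real. (1 - cos u) / u\<^sup>2) \<longlongrightarrow> 1/2) (at 0)" by real_asymp
  then have "(cos_quot \<longlongrightarrow> 1/2) (at 0)"
    by (rule Lim_transform_eventually) (auto simp: cos_quot_def eventually_at_filter)
  then show ?thesis by (simp add: isCont_def cos_quot_def)
qed

lemma isCont_sin_quot: "isCont sin_quot 0"
proof -
  have "((\<lambda>u::real. sin u / u) \<longlongrightarrow> 1) (at 0)" by real_asymp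
  then have "(sin_quot \<longlongrightarrow> 1) (at 0)"
    by (rule Lim_transform_eventually) (auto simp: sin_quot_def eventually_at_filter)
  then show ?thesis by (simp add: isCont_def sin_quot_def)
qed

lemma comparison_ratio_tendsto_sphere:
  assumes k: "k > 0" and "0 < a" "0 < b" "0 < s1"
    and small: "\<And>s. 0 < s \<Longrightarrow> s < s1 \<Longrightarrow> sqrt k * (a + b) * s \<le> pi"
    and tri: "\<And>s. 0 < s \<Longrightarrow> s < s1 \<Longrightarrow> \<bar>a - b\<bar> * s \<le> d s \<and> d s \<le> (a + b) * s"
    and thin: "\<And>s. 0 < s \<Longrightarrow> s < s1 \<Longrightarrow> comparison_thin k a b d s"
  shows "\<exists>L. ((\<lambda>s. d s / s) \<longlongrightarrow> L) (at_right 0)"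
proof -
  define K where "K = sqrt k"
  have K: "0 < K" using k by (simp add: K_def)
  have d_nonneg: "0 \<le> d s" if "0 < s" "s < s1" for s
    using tri[OF that] that(1) by (meson abs_ge_zero mult_nonneg_nonneg order_trans less_imp_le)
  define C where "C s = spherical_angle_cos (K * (a * s)) (K * (b * s)) (K * d s)" for s
  have "\<exists>C0. (C \<longlongrightarrow> C0) (at_right 0)"
  proof -
    have "\<exists>L. ((\<lambda>s. - C s) \<longlongrightarrow> L) (at_right 0)"
    proof (rule mono_bounded_tendsto_at_right_0[OF \<open>0 < s1\<close>])
      fix s t :: real assume st: "0 < s" "s \<le> t" "t < s1"
      have "C t \<le> C ((s / t) * t)"
        unfolding C_def K_def
        by (rule comparison_thin_sphere_mono[OF k thin])
          (use st tri[of t] tri[of s] d_nonneg[of s] small[of t] assms(2,3) in auto)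
      then show "- C s \<le> - C t" using st by simp
    next
      fix s assume s: "0 < s" "s < s1"
      then show "-1 \<le> - C s"
        using comparison_thin_sphere_le(2)[OF k thin[OF s] assms(2,3) s(1) small[OF s]
            conjunct1[OF tri[OF s]] conjunct2[OF tri[OF s]], of 1]
        by (simp add: C_def K_def)
    qed
    then show ?thesis using tendsto_minus_cancel_left by blast
  qed
  then obtain C0 where C0: "(C \<longlongrightarrow> C0) (at_right 0)" by blast
  show ?thesis
  proof (rule ratio_tendsto_if_cosine_law[OF K \<open>0 < s1\<close> _ C0 isCont_cos_quot _ isCont_sin_quot,
        where M = "a + b" and c = "K * (a - b)" and p = "K * a" and q = "K * b"])
    fix s assume s: "0 < s" "s < s1"
    show "0 \<le> d s \<and> d s \<le> (a + b) * s" using tri[OF s] d_nonneg[OF s] by simp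
    have "K * (a * s) + K * (b * s) = sqrt k * (a + b) * s" by (simp add: K_def algebra_simps)
    then have "0 < K * (a * s)" "0 < K * (b * s)" "K * (a * s) + K * (b * s) \<le> pi"
      using K assms(2,3) s small[OF s] by simp_all
    then have "0 < sin (K * (a * s))" "0 < sin (K * (b * s))"
      by (intro sin_gt_zero; linarith)+
    then have "sin (K * a * s) * sin (K * b * s) * C s
        = cos (K * d s) - cos (K * a * s) * cos (K * b * s)"
      unfolding C_def spherical_angle_cos_def by (simp add: mult.assoc)
    moreover have "cos (K * (a - b) * s)
        = cos (K * a * s) * cos (K * b * s) + sin (K * a * s) * sin (K * b * s)"
      by (simp add: left_diff_distrib right_diff_distrib cos_diff)
    ultimately show "cos_quot (K * d s) * (K * d s)\<^sup>2
      = cos_quot (K * (a - b) * s) * (K * (a - b) * s)\<^sup>2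
      + (K * a * s * sin_quot (K * a * s)) * (K * b * s * sin_quot (K * b * s)) * (1 - C s)"
      unfolding cos_quot_mult_square mult_sin_quot by (simp add: algebra_simps)
  qed (simp_all add: cos_quot_def sin_quot_def)
qed

definition hyperbolic_angle_cos :: "real \<Rightarrow> real \<Rightarrow> real \<Rightarrow> real" where
  "hyperbolic_angle_cos x y D = (cosh x * cosh y - cosh D) / (sinh x * sinh y)"

lemma hyperbolic_angle_cos_bounds:
  fixes x y D :: real
  assumes "0 < x" "0 < y" "\<bar>x - y\<bar> \<le> D" "D \<le> x + y"
  shows "-1 \<le> hyperbolic_angle_cos x y D" "hyperbolic_angle_cos x y D \<le> 1"
proof -
  have sinh_pos: "0 < sinh x * sinh y" using assms by simp
  have "cosh \<bar>x - y\<bar> \<le> cosh D" and "cosh D \<le> cosh (x + y)"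
    using assms by (subst cosh_real_nonneg_le_iff; auto)+
  then have "cosh x * cosh y - sinh x * sinh y \<le> cosh D" and "cosh D \<le> cosh x * cosh y + sinh x * sinh y"
    by (simp_all add: cosh_add cosh_diff)
  then show "-1 \<le> hyperbolic_angle_cos x y D" "hyperbolic_angle_cos x y D \<le> 1"
    using sinh_pos by (simp_all add: hyperbolic_angle_cos_def le_divide_eq divide_le_eq)
qed

lemma hyperbolic_cosine_law_ge_one:
  fixes x y C :: real
  assumes "0 \<le> x" "0 \<le> y" and C: "C \<le> 1"
  shows "1 \<le> cosh x * cosh y - sinh x * sinh y * C"
proof -
  have "0 \<le> sinh x" "0 \<le> sinh y" using assms by simp_all
  then have "0 \<le> sinh x * sinh y" by simp
  then have "cosh (x - y) \<le> cosh x * cosh y - sinh x * sinh y * C"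
    using mult_left_mono[OF C] by (simp add: cosh_diff)
  then show ?thesis using cosh_real_ge_1[of "x - y"] by linarith
qed

lemma cosh_le_if_le_arcosh:
  fixes t w :: real
  assumes "0 \<le> t" "t \<le> arcosh w" "1 \<le> w"
  shows "cosh t \<le> w"
proof -
  have "cosh t \<le> cosh (arcosh w)"
    using assms arcosh_nonneg_real[of w] by (subst cosh_real_nonneg_le_iff) auto
  then show ?thesis using assms(3) by simp
qed

lemma comparison_thin_hyperbolic_le:
  fixes k a b s r :: real and d :: "real \<Rightarrow> real"
  defines "x \<equiv> sqrt (- k) * (a * s)" and "y \<equiv> sqrt (- k) * (b * s)"
    and "C \<equiv> hyperbolic_angle_cos (sqrt (- k) * (a * s)) (sqrt (- k) * (b * s)) (sqrt (- k) * d s)"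
  assumes k: "k < 0" and thin: "comparison_thin k a b d s" and "0 < a" "0 < b" "0 < s"
    and tri: "\<bar>a - b\<bar> * s \<le> d s" "d s \<le> (a + b) * s" and r: "0 \<le> r" "r \<le> 1"
  shows "-1 \<le> C" "C \<le> 1"
    and "sqrt (- k) * d (r * s) \<le> arcosh (cosh (r * x) * cosh (r * y) - sinh (r * x) * sinh (r * y) * C)"
proof -
  define K D where "K = sqrt (- k)" and "D = K * d s"
  have K: "0 < K" using k by (simp add: K_def)
  have xy: "0 < x" "0 < y" using assms(6-8) K by (simp_all add: x_def y_def K_def)
  have "x - y = K * ((a - b) * s)" "x + y = K * ((a + b) * s)"
    by (simp_all add: x_def y_def K_def algebra_simps)
  then have "\<bar>x - y\<bar> = K * (\<bar>a - b\<bar> * s)" "x + y = K * ((a + b) * s)"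
    using K assms(8) by (simp_all add: abs_mult)
  then have D: "\<bar>x - y\<bar> \<le> D" "D \<le> x + y" using tri K by (simp_all add: D_def)
  show C: "-1 \<le> C" "C \<le> 1"
    unfolding C_def x_def[symmetric] y_def[symmetric] D_def[unfolded K_def, symmetric]
    using xy D by (intro hyperbolic_angle_cos_bounds; simp)+
  then have CS: "C\<^sup>2 + (sqrt (1 - C\<^sup>2))\<^sup>2 = 1" by (simp add: abs_square_le_1)
  have "0 < sinh x" "0 < sinh y" using xy by simp_all
  then have "cosh x * cosh y - sinh x * sinh y * C = cosh D"
    by (simp add: C_def hyperbolic_angle_cos_def D_def K_def flip: x_def y_def)
  moreover have "arcosh (cosh D) = D" using D xy by (intro arcosh_cosh_real) auto
  ultimately have
    "model_dist k (model_point k (a * s) 1 0) (model_point k (b * s) C (sqrt (1 - C\<^sup>2))) = d s"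
    using k K by (simp add: model_dist_model_point_hyperbolic x_def y_def D_def flip: K_def)
  then have "d (r * s) \<le> model_dist k (model_point k (r * (a * s)) 1 0)
      (model_point k (r * (b * s)) C (sqrt (1 - C\<^sup>2)))"
    by (intro comparison_thin_hinge[OF thin]) (use k assms(6-8) r CS in auto)
  also have "\<dots> = arcosh (cosh (r * x) * cosh (r * y) - sinh (r * x) * sinh (r * y) * C) / K"
    using k by (simp add: model_dist_model_point_hyperbolic x_def y_def mult.left_commute flip: K_def)
  finally show
    "sqrt (- k) * d (r * s) \<le> arcosh (cosh (r * x) * cosh (r * y) - sinh (r * x) * sinh (r * y) * C)"
    using K by (simp add: field_simps K_def)
qed

lemma comparison_thin_hyperbolic_mono:
  assumes k: "k < 0" and thin: "comparison_thin k a b d s" and "0 < a" "0 < b" "0 < s"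
    and tri: "\<bar>a - b\<bar> * s \<le> d s" "d s \<le> (a + b) * s"
    and tri_r: "0 \<le> d (r * s)" and r: "0 < r" "r \<le> 1"
  shows "hyperbolic_angle_cos (sqrt (- k) * (a * s)) (sqrt (- k) * (b * s)) (sqrt (- k) * d s)
    \<le> hyperbolic_angle_cos (sqrt (- k) * (a * (r * s))) (sqrt (- k) * (b * (r * s)))
        (sqrt (- k) * d (r * s))"
proof -
  define K x y where "K = sqrt (- k)" and "x = K * (a * (r * s))" and "y = K * (b * (r * s))"
  define C where "C = hyperbolic_angle_cos (K * (a * s)) (K * (b * s)) (K * d s)"
  have K: "0 < K" using k by (simp add: K_def)
  have xy: "0 < x" "0 < y" using r K assms(3-5) by (simp_all add: x_def y_def)
  have "C \<le> 1" and le: "K * d (r * s) \<le> arcosh (cosh x * cosh y - sinh x * sinh y * C)"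
    using comparison_thin_hyperbolic_le[OF k thin assms(3-5) tri, of r] r
    by (simp_all add: C_def x_def y_def K_def mult.left_commute)
  then have "cosh (K * d (r * s)) \<le> cosh x * cosh y - sinh x * sinh y * C"
    using xy K tri_r by (intro cosh_le_if_le_arcosh hyperbolic_cosine_law_ge_one) auto
  moreover have "0 < sinh x" "0 < sinh y" using xy by simp_all
  ultimately have "C \<le> hyperbolic_angle_cos x y (K * d (r * s))"
    unfolding hyperbolic_angle_cos_def by (simp add: le_divide_eq algebra_simps)
  then show ?thesis by (simp only: C_def x_def y_def K_def)
qed

definition cosh_quot :: "real \<Rightarrow> real" where
  "cosh_quot u = (if u = 0 then 1/2 else (cosh u - 1) / u\<^sup>2)"

definition sinh_quot :: "real \<Rightarrow> real" where
  "sinh_quot u = (if u = 0 then 1 else sinh u / u)"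

lemma cosh_quot_mult_square: "cosh_quot u * u\<^sup>2 = cosh u - 1"
  by (simp add: cosh_quot_def)

lemma mult_sinh_quot: "u * sinh_quot u = sinh u"
  by (simp add: sinh_quot_def)

lemma isCont_cosh_quot: "isCont cosh_quot 0"
proof -
  have "((\<lambda>u::real. (cosh u - 1) / u\<^sup>2) \<longlongrightarrow> 1/2) (at 0)"
    unfolding cosh_field_def by real_asymp
  then have "(cosh_quot \<longlongrightarrow> 1/2) (at 0)"
    by (rule Lim_transform_eventually) (auto simp: cosh_quot_def eventually_at_filter)
  then show ?thesis by (simp add: isCont_def cosh_quot_def)
qed

lemma isCont_sinh_quot: "isCont sinh_quot 0"
proof -
  have "((\<lambda>u::real. sinh u / u) \<longlongrightarrow> 1) (at 0)"
    unfolding sinh_field_def by real_asymp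
  then have "(sinh_quot \<longlongrightarrow> 1) (at 0)"
    by (rule Lim_transform_eventually) (auto simp: sinh_quot_def eventually_at_filter)
  then show ?thesis by (simp add: isCont_def sinh_quot_def)
qed

lemma comparison_ratio_tendsto_hyperbolic:
  assumes k: "k < 0" and "0 < a" "0 < b" "0 < s1"
    and tri: "\<And>s. 0 < s \<Longrightarrow> s < s1 \<Longrightarrow> \<bar>a - b\<bar> * s \<le> d s \<and> d s \<le> (a + b) * s"
    and thin: "\<And>s. 0 < s \<Longrightarrow> s < s1 \<Longrightarrow> comparison_thin k a b d s"
  shows "\<exists>L. ((\<lambda>s. d s / s) \<longlongrightarrow> L) (at_right 0)"
proof -
  define K where "K = sqrt (- k)"
  have K: "0 < K" using k by (simp add: K_def)
  have d_nonneg: "0 \<le> d s" if "0 < s" "s < s1" for s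
    using tri[OF that] that(1) by (meson abs_ge_zero mult_nonneg_nonneg order_trans less_imp_le)
  define C where "C s = hyperbolic_angle_cos (K * (a * s)) (K * (b * s)) (K * d s)" for s
  have "\<exists>C0. (C \<longlongrightarrow> C0) (at_right 0)"
  proof -
    have "\<exists>L. ((\<lambda>s. - C s) \<longlongrightarrow> L) (at_right 0)"
    proof (rule mono_bounded_tendsto_at_right_0[OF \<open>0 < s1\<close>])
      fix s t :: real assume st: "0 < s" "s \<le> t" "t < s1"
      have "C t \<le> C ((s / t) * t)"
        unfolding C_def K_def
        by (rule comparison_thin_hyperbolic_mono[OF k thin])
          (use st tri[of t] d_nonneg[of s] assms(2,3) in auto)
      then show "- C s \<le> - C t" using st by simp
    next
      fix s assume s: "0 < s" "s < s1"
      then show "-1 \<le> - C s"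
        using comparison_thin_hyperbolic_le(2)[OF k thin[OF s] assms(2,3) s(1) conjunct1[OF tri[OF s]]
            conjunct2[OF tri[OF s]], of 1]
        by (simp add: C_def K_def)
    qed
    then show ?thesis using tendsto_minus_cancel_left by blast
  qed
  then obtain C0 where C0: "(C \<longlongrightarrow> C0) (at_right 0)" by blast
  show ?thesis
  proof (rule ratio_tendsto_if_cosine_law[OF K \<open>0 < s1\<close> _ C0 isCont_cosh_quot _ isCont_sinh_quot,
        where M = "a + b" and c = "K * (a - b)" and p = "K * a" and q = "K * b"])
    fix s assume s: "0 < s" "s < s1"
    show "0 \<le> d s \<and> d s \<le> (a + b) * s" using tri[OF s] d_nonneg[OF s] by simp
    have "sinh (K * (a * s)) \<noteq> 0" "sinh (K * (b * s)) \<noteq> 0"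
      using K assms(2,3) s by simp_all
    then have "sinh (K * a * s) * sinh (K * b * s) * C s
        = cosh (K * a * s) * cosh (K * b * s) - cosh (K * d s)"
      unfolding C_def hyperbolic_angle_cos_def by (simp add: mult.assoc)
    moreover have "cosh (K * (a - b) * s)
        = cosh (K * a * s) * cosh (K * b * s) - sinh (K * a * s) * sinh (K * b * s)"
      by (simp add: left_diff_distrib right_diff_distrib cosh_diff)
    ultimately show "cosh_quot (K * d s) * (K * d s)\<^sup>2
      = cosh_quot (K * (a - b) * s) * (K * (a - b) * s)\<^sup>2
      + (K * a * s * sinh_quot (K * a * s)) * (K * b * s * sinh_quot (K * b * s)) * (1 - C s)"
      unfolding cosh_quot_mult_square mult_sinh_quot by (simp add: algebra_simps)
  qed (simp_all add: cosh_quot_def sinh_quot_def)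
qed

section \<open>Geodesic germs in locally CAT(k) spaces\<close>

lemma geodesic_seg_rescale:
  assumes speed: "\<forall>u\<in>{0..<e}. \<forall>v\<in>{0..<e}. dist (\<gamma> u) (\<gamma> v) = c * \<bar>u - v\<bar>"
    and s: "0 < s" "s < e"
  shows "geodesic_seg (\<lambda>t. \<gamma> (t * s)) (\<gamma> 0) (\<gamma> s)"
  unfolding geodesic_seg_def
proof (intro conjI ballI)
  have "dist (\<gamma> 0) (\<gamma> s) = c * s" using speed s by auto
  moreover fix u v :: real assume "u \<in> {0..1}" "v \<in> {0..1}"
  moreover have "u * s \<in> {0..<e}" if "u \<in> {0..1}" for u
  proof -
    have "u * s \<le> s" using that s by (intro mult_left_le_one_le) auto
    then have "u * s < e" using s by linarith
    then show ?thesis using that s by simp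
  qed
  ultimately show "dist (\<gamma> (u * s)) (\<gamma> (v * s)) = \<bar>u - v\<bar> * dist (\<gamma> 0) (\<gamma> s)"
    using speed s by (simp add: abs_mult flip: left_diff_distrib)
qed simp_all

lemma geodesic_seg_reverse:
  assumes "geodesic_seg \<gamma> x z"
  shows "geodesic_seg (\<lambda>t. \<gamma> (1 - t)) z x"
  using assms unfolding geodesic_seg_def by (auto simp: dist_commute abs_minus_commute)

lemma CAT_set_thin_hinge:
  assumes CAT: "CAT_set k U"
    and \<alpha>: "geodesic_seg \<alpha> x p" "\<alpha> ` {0..1} \<subseteq> U"
    and \<gamma>: "geodesic_seg \<gamma> q x" "\<gamma> ` {0..1} \<subseteq> U"
    and small: "k \<le> 0 \<or> dist x p + dist q x < pi / sqrt k"
    and model: "{X, Y, Z, P, Q} \<subseteq> model_carrier k" "model_dist k X Y = dist x p"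
      "model_dist k Y Z = dist p q" "model_dist k Z X = dist q x"
    and s: "s \<in> {0..1}" "model_dist k X P = s * dist x p" "model_dist k P Y = (1 - s) * dist x p"
    and t: "t \<in> {0..1}" "model_dist k Z Q = t * dist q x" "model_dist k Q X = (1 - t) * dist q x"
  shows "dist (\<alpha> s) (\<gamma> t) \<le> model_dist k P Q"
proof -
  have ends: "\<alpha> 0 = x" "\<alpha> 1 = p" "\<gamma> 0 = q" "\<gamma> 1 = x"
    using \<alpha> \<gamma> by (simp_all add: geodesic_seg_def)
  have "p \<in> U" "q \<in> U" using \<alpha>(2) \<gamma>(2) ends by force+
  moreover have "dist p q \<le> dist x p + dist q x"
    using dist_triangle[of p q x] by (simp add: dist_commute)
  ultimately obtain \<beta> where \<beta>: "geodesic_seg \<beta> p q" "\<beta> ` {0..1} \<subseteq> U"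
    using conjunct1[OF CAT[unfolded CAT_set_def], rule_format, of p q] small by force
  define g where "g i = (if i = 0 then \<alpha> else if i = 1 then \<beta> else \<gamma>)" for i :: nat
  define A where "A i = (if i = 0 then X else if i = 1 then Y else Z)" for i :: nat
  have less_3: "(\<forall>i<3. R i) \<longleftrightarrow> R 0 \<and> R 1 \<and> R 2" for R :: "nat \<Rightarrow> bool"
    by (auto simp: numeral_3_eq_3 numeral_2_eq_2 less_Suc_eq)
  have ends_\<beta>: "\<beta> 0 = p" "\<beta> 1 = q" using \<beta> by (simp_all add: geodesic_seg_def)
  have "\<forall>i<3. geodesic_seg (g i) (g i 0) (g (Suc i mod 3) 0) \<and> g i ` {0..1} \<subseteq> U"
    using \<alpha> \<beta> \<gamma> ends ends_\<beta> by (simp add: less_3 g_def)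
  moreover have "k \<le> 0 \<or> (\<Sum>i<3. dist (g i 0) (g i 1)) < 2 * pi / sqrt k"
    using small \<open>dist p q \<le> dist x p + dist q x\<close> ends ends_\<beta> by (auto simp: numeral_3_eq_3 g_def)
  moreover have
    "\<forall>i<3. A i \<in> model_carrier k \<and> model_dist k (A i) (A (Suc i mod 3)) = dist (g i 0) (g i 1)"
    using model ends ends_\<beta> by (simp add: less_3 A_def g_def)
  ultimately have "dist (g 0 s) (g 2 t) \<le> model_dist k P Q"
    using conjunct2[OF CAT[unfolded CAT_set_def], rule_format, of g A 0 2 s t P Q] s t model ends
    by (simp add: A_def g_def)
  then show ?thesis by (simp add: g_def)
qed

lemma comparison_thin_if_CAT_set:
  fixes \<gamma> \<eta> :: "real \<Rightarrow> 'a::metric_space"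
  assumes CAT: "CAT_set k U" and ball: "ball y \<rho> \<subseteq> U"
    and \<gamma>: "\<gamma> 0 = y" "\<forall>u\<in>{0..<e}. \<forall>v\<in>{0..<e}. dist (\<gamma> u) (\<gamma> v) = a * \<bar>u - v\<bar>"
    and \<eta>: "\<eta> 0 = y" "\<forall>u\<in>{0..<e}. \<forall>v\<in>{0..<e}. dist (\<eta> u) (\<eta> v) = b * \<bar>u - v\<bar>"
    and ab: "0 \<le> a" "0 \<le> b" and s: "0 < s" "s < e" and near: "(a + b) * s < \<rho>"
    and small: "k \<le> 0 \<or> sqrt k * (a + b) * s < pi"
  shows "comparison_thin k a b (\<lambda>t. dist (\<gamma> t) (\<eta> t)) s"
proof -
  have from_y: "dist y (\<gamma> u) = a * u" "dist y (\<eta> u) = b * u" if "u \<in> {0..<e}" for u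
    using \<gamma>(2)[rule_format, of 0 u] \<eta>(2)[rule_format, of 0 u] that s \<gamma>(1) \<eta>(1) by auto
  have a_s: "dist y (\<gamma> s) = a * s" and b_s: "dist (\<eta> s) y = b * s"
    using from_y[of s] s by (auto simp: dist_commute)
  have \<alpha>: "geodesic_seg (\<lambda>t. \<gamma> (t * s)) y (\<gamma> s)"
    using geodesic_seg_rescale[OF \<gamma>(2) s] \<gamma>(1) by simp
  have \<delta>: "geodesic_seg (\<lambda>t. \<eta> ((1 - t) * s)) (\<eta> s) y"
    using geodesic_seg_reverse[OF geodesic_seg_rescale[OF \<eta>(2) s]] \<eta>(1) by simp
  have in_U: "\<gamma> u \<in> U \<and> \<eta> u \<in> U" if "u \<in> {0..s}" for u
  proof -
    have "dist y (\<gamma> u) = a * u" "dist y (\<eta> u) = b * u"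
      using from_y[of u] s that by auto
    moreover have "a * u + b * u \<le> (a + b) * s"
      using ab that by (simp add: mult_left_mono flip: distrib_right)
    moreover have "0 \<le> a * u" "0 \<le> b * u" using ab that by simp_all
    ultimately have "dist y (\<gamma> u) < \<rho>" "dist y (\<eta> u) < \<rho>" using near by linarith+
    then show ?thesis using ball by auto
  qed
  moreover have "t * s \<in> {0..s}" "(1 - t) * s \<in> {0..s}" if "t \<in> {0..1}" for t
    using that s by (auto intro: mult_left_le_one_le)
  ultimately have \<alpha>U: "(\<lambda>t. \<gamma> (t * s)) ` {0..1} \<subseteq> U" and \<delta>U: "(\<lambda>t. \<eta> ((1 - t) * s)) ` {0..1} \<subseteq> U"
    by blast+
  have short: "k \<le> 0 \<or> dist y (\<gamma> s) + dist (\<eta> s) y < pi / sqrt k"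
    using small a_s b_s by (auto simp: less_divide_eq algebra_simps)
  show ?thesis
    unfolding comparison_thin_def
  proof (intro allI impI, elim conjE)
    fix V A B P Q r assume "{V, A, B, P, Q} \<subseteq> model_carrier k" "0 \<le> r" "r \<le> 1"
      "model_dist k V A = a * s" "model_dist k A B = dist (\<gamma> s) (\<eta> s)" "model_dist k B V = b * s"
      "model_dist k V P = r * (a * s)" "model_dist k P A = (1 - r) * (a * s)"
      "model_dist k B Q = (1 - r) * (b * s)" "model_dist k Q V = r * (b * s)"
    then have "dist (\<gamma> (r * s)) (\<eta> ((1 - (1 - r)) * s)) \<le> model_dist k P Q"
      using CAT_set_thin_hinge[OF CAT \<alpha> \<alpha>U \<delta> \<delta>U short, of V A B P Q r "1 - r"] a_s b_s
      by simp
    then show "dist (\<gamma> (r * s)) (\<eta> (r * s)) \<le> model_dist k P Q" by simp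
  qed
qed

lemma dist_geodesics_from_point_bounds:
  fixes \<gamma> \<eta> :: "real \<Rightarrow> 'a::metric_space"
  assumes "\<gamma> 0 = y" "\<forall>u\<in>{0..<e}. \<forall>v\<in>{0..<e}. dist (\<gamma> u) (\<gamma> v) = a * \<bar>u - v\<bar>"
    and "\<eta> 0 = y" "\<forall>u\<in>{0..<e}. \<forall>v\<in>{0..<e}. dist (\<eta> u) (\<eta> v) = b * \<bar>u - v\<bar>"
    and t: "0 < t" "t < e"
  shows "\<bar>a - b\<bar> * t \<le> dist (\<gamma> t) (\<eta> t) \<and> dist (\<gamma> t) (\<eta> t) \<le> (a + b) * t"
proof -
  have "dist (\<gamma> t) y = a * t" "dist (\<eta> t) y = b * t"
    using assms(2)[rule_format, of t 0] assms(4)[rule_format, of t 0] assms(1,3) t by auto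
  then have "dist (\<gamma> t) (\<eta> t) \<le> a * t + b * t" "a * t \<le> dist (\<gamma> t) (\<eta> t) + b * t"
    "b * t \<le> dist (\<gamma> t) (\<eta> t) + a * t"
    using dist_triangle[of "\<gamma> t" "\<eta> t" y] dist_triangle[of "\<gamma> t" y "\<eta> t"] dist_triangle[of "\<eta> t" y "\<gamma> t"]
    by (simp_all add: dist_commute)
  moreover have "\<bar>a * t - b * t\<bar> = \<bar>a - b\<bar> * t" using t by (simp add: abs_mult flip: left_diff_distrib)
  ultimately show ?thesis by (simp add: abs_le_iff distrib_right)
qed

lemma eventually_comparison_thin:
  fixes \<gamma> \<eta> :: "real \<Rightarrow> 'a::metric_space"
  assumes loc: "locally_CAT k TYPE('a)" and e: "0 < e" and ab: "0 \<le> a" "0 \<le> b"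
    and \<gamma>: "\<gamma> 0 = y" "\<forall>u\<in>{0..<e}. \<forall>v\<in>{0..<e}. dist (\<gamma> u) (\<gamma> v) = a * \<bar>u - v\<bar>"
    and \<eta>: "\<eta> 0 = y" "\<forall>u\<in>{0..<e}. \<forall>v\<in>{0..<e}. dist (\<eta> u) (\<eta> v) = b * \<bar>u - v\<bar>"
  shows "\<forall>\<^sub>F s in at_right 0. s < e \<and> sqrt k * (a + b) * s \<le> pi \<and>
    comparison_thin k a b (\<lambda>t. dist (\<gamma> t) (\<eta> t)) s"
proof -
  obtain U where "y \<in> interior U" and CAT: "CAT_set k U" using loc unfolding locally_CAT_def by blast
  then obtain \<rho> where \<rho>: "0 < \<rho>" "ball y \<rho> \<subseteq> U"
    by (meson interior_subset open_contains_ball_eq open_interior subset_trans)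
  have small: "\<forall>\<^sub>F s in at_right 0. c * s < \<delta>" if "0 < \<delta>" for c \<delta> :: real
  proof -
    have "((\<lambda>s. c * s) \<longlongrightarrow> c * 0) (at_right 0)" by (intro tendsto_intros)
    then show ?thesis using order_tendstoD(2) that by fastforce
  qed
  have "\<forall>\<^sub>F s in at_right 0. 0 < s \<and> 1 * s < e \<and> (a + b) * s < \<rho> \<and> (sqrt k * (a + b)) * s < pi"
    using e \<rho> by (intro eventually_conj small eventually_at_right_less)  auto
  then show ?thesis
  proof eventually_elim
    case (elim s)
    then show ?case
      using comparison_thin_if_CAT_set[OF CAT \<rho>(2) \<gamma> \<eta> ab, of s] by (auto simp: mult.assoc)
  qed
qed

lemma germ_dist_ratio_convergent:
  fixes \<gamma> \<eta> :: "real \<Rightarrow> 'a::metric_space"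
  assumes loc: "locally_CAT k TYPE('a)" and "germ y \<gamma>" and "germ y \<eta>"
  shows "\<exists>L. ((\<lambda>t. dist (\<gamma> t) (\<eta> t) / t) \<longlongrightarrow> L) (at_right 0)"
proof -
  obtain e1 e2 a b where "0 < e1" "0 \<le> a" "\<gamma> 0 = y" "0 < e2" "0 \<le> b" "\<eta> 0 = y"
    and "\<forall>u\<in>{0..<e1}. \<forall>v\<in>{0..<e1}. dist (\<gamma> u) (\<gamma> v) = a * \<bar>u - v\<bar>"
    and "\<forall>u\<in>{0..<e2}. \<forall>v\<in>{0..<e2}. dist (\<eta> u) (\<eta> v) = b * \<bar>u - v\<bar>"
    using \<open>germ y \<gamma>\<close> \<open>germ y \<eta>\<close> unfolding germ_def by blast
  moreover define e where "e = min e1 e2"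
  ultimately have e: "0 < e" and ab: "0 \<le> a" "0 \<le> b" and \<gamma>: "\<gamma> 0 = y"
    "\<forall>u\<in>{0..<e}. \<forall>v\<in>{0..<e}. dist (\<gamma> u) (\<gamma> v) = a * \<bar>u - v\<bar>"
    and \<eta>: "\<eta> 0 = y" "\<forall>u\<in>{0..<e}. \<forall>v\<in>{0..<e}. dist (\<eta> u) (\<eta> v) = b * \<bar>u - v\<bar>"
    by auto
  define d where "d = (\<lambda>t. dist (\<gamma> t) (\<eta> t))"
  have tri: "\<bar>a - b\<bar> * t \<le> d t \<and> d t \<le> (a + b) * t" if "0 < t" "t < e" for t
    unfolding d_def using \<gamma> \<eta> that by (rule dist_geodesics_from_point_bounds)
  have "\<exists>L. ((\<lambda>s. d s / s) \<longlongrightarrow> L) (at_right 0)"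
  proof (cases "a = 0 \<or> b = 0")
    case True
    have "\<forall>\<^sub>F t in at_right 0. d t / t = a + b"
      using eventually_at_right_real[OF e]
    proof eventually_elim
      case (elim t)
      then show ?case using tri[of t] True ab by (auto simp: field_simps)
    qed
    then show ?thesis by (blast intro: tendsto_eventually)
  next
    case False
    then have a: "0 < a" and b: "0 < b" using ab by auto
    obtain s1 where s1: "0 < s1" and s1_small: "\<And>s. 0 < s \<Longrightarrow> s < s1 \<Longrightarrow> s < e \<and>
        sqrt k * (a + b) * s \<le> pi \<and> comparison_thin k a b d s"
      using eventually_comparison_thin[OF loc e ab \<gamma> \<eta>] unfolding eventually_at_right_field d_def
      by blast
    have tri1: "\<bar>a - b\<bar> * s \<le> d s \<and> d s \<le> (a + b) * s" if "0 < s" "s < s1" for s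
      using tri s1_small[OF that] that by blast
    have thin: "comparison_thin k a b d s" if "0 < s" "s < s1" for s
      using s1_small[OF that] by blast
    consider "k = 0" | "k > 0" | "k < 0" by linarith
    then show ?thesis
    proof cases
      case 1
      show ?thesis using comparison_ratio_tendsto_plane[OF a b s1 tri1] thin unfolding 1 by blast
    next
      case 2
      show ?thesis
        using comparison_ratio_tendsto_sphere[OF 2 a b s1 _ tri1 thin] s1_small by blast
    next
      case 3
      show ?thesis using comparison_ratio_tendsto_hyperbolic[OF 3 a b s1 tri1 thin] .
    qed
  qed
  then show ?thesis by (simp add: d_def)
qed

lemma germ_dist_ratio_tendsto:
  fixes \<gamma> \<eta> :: "real \<Rightarrow> 'a::metric_space"
  assumes "locally_CAT k TYPE('a)" and "germ y \<gamma>" and "germ y \<eta>"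
  shows "((\<lambda>t. dist (\<gamma> t) (\<eta> t) / t) \<longlongrightarrow> dgerm \<gamma> \<eta>) (at_right 0)"
proof -
  obtain L where L: "((\<lambda>t. dist (\<gamma> t) (\<eta> t) / t) \<longlongrightarrow> L) (at_right 0)"
    using germ_dist_ratio_convergent[OF assms] by blast
  then have "dgerm \<gamma> \<eta> = L" unfolding dgerm_def by (intro tendsto_Lim) auto
  with L show ?thesis by simp
qed

section \<open>The tangent cone and the slope\<close>

lemma dgerm_commute: "dgerm \<gamma> \<eta> = dgerm \<eta> \<gamma>"
  unfolding dgerm_def by (simp add: dist_commute)

lemma dgerm_nonneg:
  fixes \<gamma> \<eta> :: "real \<Rightarrow> 'a::metric_space"
  assumes "locally_CAT k TYPE('a)" and "germ y \<gamma>" and "germ y \<eta>"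
  shows "0 \<le> dgerm \<gamma> \<eta>"
proof (rule tendsto_lowerbound[OF germ_dist_ratio_tendsto[OF assms]])
  show "\<forall>\<^sub>F t in at_right 0. 0 \<le> dist (\<gamma> t) (\<eta> t) / t"
    using eventually_at_right_less[of 0] by (rule eventually_mono) simp
qed simp

lemma dgerm_triangle:
  fixes \<gamma> \<zeta> \<eta> :: "real \<Rightarrow> 'a::metric_space"
  assumes loc: "locally_CAT k TYPE('a)" and "germ y \<gamma>" "germ y \<zeta>" "germ y \<eta>"
  shows "dgerm \<gamma> \<eta> \<le> dgerm \<gamma> \<zeta> + dgerm \<zeta> \<eta>"
proof (rule tendsto_le[OF trivial_limit_at_right_real])
  show "((\<lambda>t. dist (\<gamma> t) (\<zeta> t) / t + dist (\<zeta> t) (\<eta> t) / t) \<longlongrightarrow> dgerm \<gamma> \<zeta> + dgerm \<zeta> \<eta>) (at_right 0)"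
    using assms by (intro tendsto_add germ_dist_ratio_tendsto)
  show "((\<lambda>t. dist (\<gamma> t) (\<eta> t) / t) \<longlongrightarrow> dgerm \<gamma> \<eta>) (at_right 0)"
    using assms by (intro germ_dist_ratio_tendsto)
  show "\<forall>\<^sub>F t in at_right 0. dist (\<gamma> t) (\<eta> t) / t \<le> dist (\<gamma> t) (\<zeta> t) / t + dist (\<zeta> t) (\<eta> t) / t"
    using eventually_at_right_less[of 0]
    by (rule eventually_mono) (simp add: add_divide_distrib[symmetric] divide_right_mono dist_triangle)
qed

lemma dgerm_reverse_triangle:
  fixes \<gamma> \<zeta> \<eta> :: "real \<Rightarrow> 'a::metric_space"
  assumes "locally_CAT k TYPE('a)" and "germ y \<gamma>" "germ y \<zeta>" "germ y \<eta>"
  shows "\<bar>dgerm \<gamma> \<eta> - dgerm \<zeta> \<eta>\<bar> \<le> dgerm \<gamma> \<zeta>"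
  using dgerm_triangle[OF assms] dgerm_triangle[OF assms(1,3,2,4)] dgerm_commute[of \<gamma> \<zeta>]
  by linarith

lemma germ_const: "germ y (\<lambda>_. y)"
  unfolding germ_def by (intro conjI exI[of _ 1] exI[of _ 0]) simp_all

lemma germ_if_geodesic_seg:
  assumes "geodesic_seg \<gamma> y z"
  shows "germ y \<gamma>"
proof -
  have "\<gamma> 0 = y" and "\<forall>u\<in>{0..1}. \<forall>v\<in>{0..1}. dist (\<gamma> u) (\<gamma> v) = \<bar>u - v\<bar> * dist y z"
    using assms unfolding geodesic_seg_def by blast+
  then show ?thesis
    unfolding germ_def by (intro conjI exI[of _ 1] exI[of _ "dist y z"]) (simp_all add: mult.commute)
qed

lemma dgerm_geodesic_seg_const:
  assumes "geodesic_seg \<gamma> y z"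
  shows "dgerm \<gamma> (\<lambda>_. y) = dist y z"
  unfolding dgerm_def
proof (rule tendsto_Lim[OF trivial_limit_at_right_real])
  have "\<forall>\<^sub>F t in at_right 0. dist (\<gamma> t) y / t = dist y z"
  proof (rule eventually_mono[OF eventually_at_right_real[of 0 1]])
    fix t :: real assume t: "t \<in> {0<..<1}"
    have "\<gamma> 0 = y" and "\<forall>u\<in>{0..1}. \<forall>v\<in>{0..1}. dist (\<gamma> u) (\<gamma> v) = \<bar>u - v\<bar> * dist y z"
      using assms unfolding geodesic_seg_def by blast+
    then have "dist (\<gamma> t) y = t * dist y z" using t by force
    then show "dist (\<gamma> t) y / t = dist y z" using t by simp
  qed simp
  then show "((\<lambda>t. dist (\<gamma> t) y / t) \<longlongrightarrow> dist y z) (at_right 0)"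
    by (rule tendsto_eventually)
qed

lemma Cauchy_if_dist_le:
  fixes f :: "nat \<Rightarrow> 'a::metric_space"
  assumes "\<And>m n. dist (f m) (f n) \<le> g m n"
    and "\<And>e. e > 0 \<Longrightarrow> \<exists>N. \<forall>m\<ge>N. \<forall>n\<ge>N. g m n < e"
  shows "Cauchy f"
proof (rule metric_CauchyI)
  fix e :: real assume "e > 0"
  with assms(2) obtain N where N: "\<forall>m\<ge>N. \<forall>n\<ge>N. g m n < e" by blast
  show "\<exists>M. \<forall>m\<ge>M. \<forall>n\<ge>M. dist (f m) (f n) < e"
  proof (intro exI allI impI)
    fix m n assume "N \<le> m" "N \<le> n"
    then show "dist (f m) (f n) < e" using N assms(1)[of m n] by force
  qed
qed

lemma tangent_seq_dgerm_tendsto: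
  fixes v :: "nat \<Rightarrow> real \<Rightarrow> 'a::metric_space"
  assumes loc: "locally_CAT k TYPE('a)" and v: "tangent_seq y v" and \<gamma>: "germ y \<gamma>"
  shows "(\<lambda>n. dgerm (v n) \<gamma>) \<longlonglongrightarrow> lim (\<lambda>n. dgerm (v n) \<gamma>)"
proof -
  have "Cauchy (\<lambda>n. dgerm (v n) \<gamma>)"
  proof (rule Cauchy_if_dist_le)
    show "dist (dgerm (v m) \<gamma>) (dgerm (v n) \<gamma>) \<le> dgerm (v m) (v n)" for m n
      using v \<gamma> unfolding tangent_seq_def dist_real_def by (blast intro: dgerm_reverse_triangle[OF loc])
  qed (use v in \<open>auto simp: tangent_seq_def\<close>)
  then show ?thesis
    by (simp add: Cauchy_convergent_iff convergent_LIMSEQ_iff)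
qed

lemma tnorm_nonneg:
  fixes v :: "nat \<Rightarrow> real \<Rightarrow> 'a::metric_space"
  assumes loc: "locally_CAT k TYPE('a)" and v: "tangent_seq y v"
  shows "0 \<le> tnorm y v"
  unfolding tnorm_def
proof (rule LIMSEQ_le_const[OF tangent_seq_dgerm_tendsto[OF loc v germ_const]])
  show "\<exists>N. \<forall>n\<ge>N. 0 \<le> dgerm (v n) (\<lambda>_. y)"
    using v unfolding tangent_seq_def by (blast intro: dgerm_nonneg[OF loc] germ_const)
qed

lemma tinner_le_tnorm_mult_dist:
  fixes v :: "nat \<Rightarrow> real \<Rightarrow> 'a::metric_space"
  assumes loc: "locally_CAT k TYPE('a)" and v: "tangent_seq y v" and \<gamma>: "geodesic_seg \<gamma> y z"
  shows "tinner y v \<gamma> \<le> tnorm y v * dist y z"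
proof -
  define a where "a n = dgerm (v n) (\<lambda>_. y)" for n
  define d where "d n = dgerm (v n) \<gamma>" for n
  have g\<gamma>: "germ y \<gamma>" using \<gamma> by (rule germ_if_geodesic_seg)
  have gv: "germ y (v n)" for n using v by (simp add: tangent_seq_def)
  have a: "a \<longlonglongrightarrow> tnorm y v"
    unfolding a_def tnorm_def by (rule tangent_seq_dgerm_tendsto[OF loc v germ_const])
  have d: "d \<longlonglongrightarrow> lim d"
    unfolding d_def by (rule tangent_seq_dgerm_tendsto[OF loc v g\<gamma>])
  have b: "dgerm \<gamma> (\<lambda>_. y) = dist y z" using \<gamma> by (rule dgerm_geodesic_seg_const)
  have terms: "(\<lambda>n. ((a n)\<^sup>2 + (dist y z)\<^sup>2 - (d n)\<^sup>2) / 2)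
      \<longlonglongrightarrow> ((tnorm y v)\<^sup>2 + (dist y z)\<^sup>2 - (lim d)\<^sup>2) / 2"
    by (intro tendsto_intros a d) auto
  have "((a n)\<^sup>2 + (dist y z)\<^sup>2 - (d n)\<^sup>2) / 2 \<le> a n * dist y z" for n
  proof -
    have "\<bar>a n - dist y z\<bar> \<le> d n"
      using dgerm_reverse_triangle[OF loc gv g\<gamma> germ_const, of n]
      by (simp add: a_def d_def b)
    then have "(a n - dist y z)\<^sup>2 \<le> (d n)\<^sup>2"
      by (metis abs_le_square_iff abs_of_nonneg abs_ge_zero order.trans)
    then show ?thesis by (simp add: power2_diff)
  qed
  then have "((tnorm y v)\<^sup>2 + (dist y z)\<^sup>2 - (lim d)\<^sup>2) / 2 \<le> tnorm y v * dist y z"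
    by (intro LIMSEQ_le[OF terms tendsto_mult_right[OF a]]) auto
  moreover have "tinner y v \<gamma> = ((tnorm y v)\<^sup>2 + (dist y z)\<^sup>2 - (lim d)\<^sup>2) / 2"
    unfolding tinner_def using terms by (intro limI) (simp add: a_def d_def b)
  ultimately show ?thesis by simp
qed

lemma slope_le_if_descent_bound:
  fixes E :: "'a::metric_space \<Rightarrow> ereal"
  assumes "0 \<le> A" "0 \<le> B"
    and descent: "\<And>z. z \<noteq> y \<Longrightarrow> E y - E z \<le> ereal (A * dist y z + B * (dist y z)\<^sup>2)"
  shows "slope E y \<le> ereal A"
proof -
  have "max 0 (E y - E z) / ereal (dist y z) \<le> ereal (A + B * dist y z)" if "z \<noteq> y" for z
  proof -
    have pos: "0 < dist y z" using that by simp
    have "max 0 (E y - E z) \<le> ereal (A * dist y z + B * (dist y z)\<^sup>2)"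
      using descent[OF that] assms(1,2) pos by simp
    then have "max 0 (E y - E z) / ereal (dist y z)
        \<le> ereal (A * dist y z + B * (dist y z)\<^sup>2) / ereal (dist y z)"
      using pos by (intro ereal_divide_right_mono) auto
    also have "\<dots> = ereal (A + B * dist y z)"
      using pos by (simp add: field_simps power2_eq_square)
    finally show ?thesis .
  qed
  then have "slope E y \<le> Limsup (at y) (\<lambda>z. ereal (A + B * dist y z))"
    unfolding slope_def by (intro Limsup_mono) (simp add: eventually_at_filter)
  also have "\<dots> \<le> ereal A"
  proof (cases "at y = (bot :: 'a filter)")
    case False
    have "((\<lambda>z. A + B * dist y z) \<longlongrightarrow> A + B * dist y y) (at y)"
      by (intro tendsto_intros)
    then have "((\<lambda>z. ereal (A + B * dist y z)) \<longlongrightarrow> ereal A) (at y)"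
      by (intro tendsto_ereal) simp
    then have "Limsup (at y) (\<lambda>z. ereal (A + B * dist y z)) = ereal A"
      by (rule lim_imp_Limsup[OF False])
    then show ?thesis by simp
  qed simp
  finally show ?thesis .
qed

lemma slope_le_tnorm_if_minus_subdiff:
  fixes E :: "'a::metric_space \<Rightarrow> ereal"
  assumes loc: "locally_CAT k TYPE('a)" and "E y \<noteq> - \<infinity>" and v: "v \<in> minus_subdiff l E y"
  shows "slope E y \<le> ereal (tnorm y v)"
proof (rule slope_le_if_descent_bound)
  have "E y \<noteq> \<infinity>" and tv: "tangent_seq y v"
    and sub: "\<And>z. \<exists>\<gamma>. geodesic_seg \<gamma> y z \<and>
      E y - ereal (tinner y v \<gamma>) + ereal (l / 2 * (dist y z)\<^sup>2) \<le> E z"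
    using v unfolding minus_subdiff_def by auto
  then obtain e where e: "E y = ereal e" using assms(2) by (cases "E y") auto
  show "0 \<le> tnorm y v" using loc tv by (rule tnorm_nonneg)
  show "0 \<le> \<bar>l\<bar> / 2" by simp
  fix z
  obtain \<gamma> where \<gamma>: "geodesic_seg \<gamma> y z"
    and "E y - ereal (tinner y v \<gamma>) + ereal (l / 2 * (dist y z)\<^sup>2) \<le> E z"
    using sub by blast
  then have "ereal (e - tinner y v \<gamma> + l / 2 * (dist y z)\<^sup>2) \<le> E z" by (simp add: e)
  then have "E y - E z \<le> ereal e - ereal (e - tinner y v \<gamma> + l / 2 * (dist y z)\<^sup>2)"
    by (intro ereal_minus_mono) (simp_all add: e)
  also have "\<dots> = ereal (tinner y v \<gamma> - l / 2 * (dist y z)\<^sup>2)" by simp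
  also have "\<dots> \<le> ereal (tnorm y v * dist y z + \<bar>l\<bar> / 2 * (dist y z)\<^sup>2)"
  proof -
    have "- l / 2 * (dist y z)\<^sup>2 \<le> \<bar>l\<bar> / 2 * (dist y z)\<^sup>2"
      by (intro mult_right_mono divide_right_mono) auto
    then show ?thesis using tinner_le_tnorm_mult_dist[OF loc tv \<gamma>] by simp
  qed
  finally show "E y - E z \<le> ereal (tnorm y v * dist y z + \<bar>l\<bar> / 2 * (dist y z)\<^sup>2)" .
qed

theorem proposition3p9:
  fixes k l :: real and E :: "'a::complete_space \<Rightarrow> ereal"
  assumes "geodesic_space TYPE('a)"
    and "locally_CAT k TYPE('a)"
    and "\<forall>y. E y \<noteq> - \<infinity>"
    and "lambda_convex l E"
    and "lsc E"
  shows "(\<forall>y\<in>dom_subdiff l E. slope E y \<le> (INF v\<in>minus_subdiff l E y. ereal (tnorm y v)))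
         \<and> dom_subdiff l E \<subseteq> dom_slope E"
proof -
  have slope_le: "slope E y \<le> ereal (tnorm y v)" if "v \<in> minus_subdiff l E y" for y v
    using slope_le_tnorm_if_minus_subdiff[OF assms(2)] assms(3) that by blast
  have "y \<in> dom_slope E" if y: "y \<in> dom_subdiff l E" for y
  proof -
    obtain v where v: "v \<in> minus_subdiff l E y" and "E y \<noteq> \<infinity>"
      using y unfolding dom_subdiff_def by blast
    have "slope E y < \<infinity>"
      using slope_le[OF v] by (rule order.strict_trans1) simp
    with \<open>E y \<noteq> \<infinity>\<close> show ?thesis
      unfolding dom_slope_def by simp
  qed
  then show ?thesis
    using slope_le by (auto intro!: INF_greatest)
qed

end
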